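(* For every $i$ (indices mod $8g-4$), $T_{\sigma(i)+1}T_i=T_{\sigma(i-1)-1}T_{i-1}$.
   Context: Fix $g\ge 2$. Let $\mathcal F$ be the regular hyperbolic $(8g-4)$-gon in the unit disk centered at $0$ with all interior angles $\pi/2$, sides labeled $1,\dots,8g-4$ counterclockwise, vertex $V_i$ the common endpoint of sides $i-1$ and $i$; indices mod $8g-4$. Let $\sigma(i)=4g-i$ for odd $i$, $\sigma(i)=2-i$ for even $i$, and $\rho(i)=\sigma(i)+1$. $T_i$ is the Möbius transformation mapping side $i$ onto side $\sigma(i)$ (its isometric circle contains side $i$); these generators satisfy $T_{\sigma(i)}T_i=\mathrm{Id}$, $T_i(V_i)=V_{\rho(i)}$, and $T_{\rho^3(i)}T_{\rho^2(i)}T_{\rho(i)}T_i=\mathrm{Id}$ for all $i$. *)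

theory Defs
  imports "HOL-Analysis.Analysis"
begin

definition nsides :: "nat \<Rightarrow> int" where
  "nsides g = 8 * int g - 4"

definition idx :: "nat \<Rightarrow> int \<Rightarrow> int" where
  "idx g i = (i - 1) mod nsides g + 1"

(* Side pairing sigma (on reduced indices; parity is well defined since N is even). *)
definition sigma :: "nat \<Rightarrow> int \<Rightarrow> int" where
  "sigma g i = (let j = idx g i in idx g (if odd j then 4 * int g - j else 2 - j))"

definition rho :: "nat \<Rightarrow> int \<Rightarrow> int" where
  "rho g i = idx g (sigma g i + 1)"

(* Geometry of the regular N-gon centred at 0 with interior angles pi/2.
   Convention (rotation of the polygon): the midpoint of side i lies on the ray of
   angle alpha_i = 2 pi i / N, so V_i (common endpoint of sides i-1 and i) lies on
   the ray of angle alpha_i - pi/N.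
   If a is the hyperbolic distance from 0 to the midpoint of a side, the right
   triangle (centre, side midpoint, vertex) with angles pi/N and pi/4 gives
   cosh a = cos(pi/4) / sin(pi/N). *)
definition side_angle :: "nat \<Rightarrow> int \<Rightarrow> real" where
  "side_angle g i = 2 * pi * real_of_int (idx g i) / real_of_int (nsides g)"

definition mid_dist :: "nat \<Rightarrow> real" where
  "mid_dist g = arcosh (cos (pi / 4) / sin (pi / real_of_int (nsides g)))"

(* hyperbolic translation along the real axis carrying the side with midpoint
   tanh(a/2) (on the positive real axis) onto the side with midpoint -tanh(a/2);
   its isometric circle is the geodesic containing the first side. *)
definition transl :: "real \<Rightarrow> complex \<Rightarrow> complex" where
  "transl t z = (z - complex_of_real t) / (1 - complex_of_real t * z)"

(* T_i : the Moebius transformation mapping side i onto side sigma(i), with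
   isometric circle containing side i (so T_i(V_i) = V_rho(i)):
   rotate side i to the positive real axis, translate, rotate to side sigma(i). *)
definition Tgen :: "nat \<Rightarrow> int \<Rightarrow> complex \<Rightarrow> complex" where
  "Tgen g i z =
     cis (side_angle g (sigma g i) + pi) *
       transl (tanh (mid_dist g)) (cis (- side_angle g i) * z)"

end

theory Submission
  imports Defs "HOL-Number_Theory.Cong" "HOL-Complex_Analysis.Riemann_Mapping"
begin

text \<open>Put \<open>e x = cis (2\<pi>x/N)\<close> and let \<open>\<tau>\<close> be the hyperbolic translation along the real
  axis by \<open>2a\<close>, where \<open>a\<close> is the distance from the centre to a side. Then \<open>T\<^sub>j y = - e (\<sigma> j) \<cdot> \<tau> (y / e j)\<close>.
  Because \<open>\<sigma>(\<sigma>(i) + 1) \<equiv> \<sigma>(\<sigma>(i - 1) - 1) - 1 (mod N)\<close>, both sides of the claim end with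
  the same rotation, and after normalising the rotations the claim becomes the single identity
  \<open>\<tau> (- \<tau> u / w) = w \<cdot> \<tau> (- w \<cdot> \<tau> (w u))\<close> with \<open>w = e 1\<close>. Clearing denominators turns it
  into a polynomial identity that follows from \<open>tanh\<^sup>2 a = cos (2\<pi>/N) = Re w\<close>, which is where
  the right angles of the polygon enter.\<close>

definition sigma_unreduced :: "nat \<Rightarrow> int \<Rightarrow> int" where
  "sigma_unreduced g x = (if odd x then 4 * int g - x else 2 - x)"

lemma idx_cong: "[idx g x = x] (mod nsides g)"
  unfolding idx_def cong_def by (simp add: mod_simps)

lemma sigma_unreduced_cong:
  assumes "[a = b] (mod nsides g)"
  shows "[sigma_unreduced g a = sigma_unreduced g b] (mod nsides g)"
proof -
  have "[a = b] (mod 2)"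
    using assms by (rule cong_dvd_modulus) (simp add: nsides_def)
  then have "odd a = odd b"
    by (simp add: cong_def odd_iff_mod_2_eq_one)
  then show ?thesis
    using assms by (auto simp: sigma_unreduced_def intro: cong_diff)
qed

lemma sigma_cong_unreduced: "[sigma g x = sigma_unreduced g x] (mod nsides g)"
proof -
  have "sigma g x = idx g (sigma_unreduced g (idx g x))"
    unfolding sigma_def sigma_unreduced_def Let_def by simp
  then show ?thesis
    using cong_trans[OF idx_cong sigma_unreduced_cong[OF idx_cong]] by simp
qed

lemma sigma_unreduced_succ_pred:
  "[sigma_unreduced g (sigma_unreduced g i + 1)
      = sigma_unreduced g (sigma_unreduced g (i - 1) - 1) - 1] (mod nsides g)"
  by (cases "odd i")
    (auto simp: sigma_unreduced_def nsides_def cong_iff_dvd_diff dvd_diff_commute[of _ 4])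

lemma sigma_succ_pred_cong:
  "[sigma g (sigma g i + 1) = sigma g (sigma g (i - 1) - 1) - 1] (mod nsides g)"
proof -
  let ?s = "sigma g" and ?s' = "sigma_unreduced g" and ?n = "nsides g"
  have "[?s' (?s i + 1) = ?s' (?s' i + 1)] (mod ?n)"
    using sigma_unreduced_cong cong_add[OF sigma_cong_unreduced cong_refl] by blast
  then have "[?s (?s i + 1) = ?s' (?s' i + 1)] (mod ?n)"
    using sigma_cong_unreduced cong_trans by blast
  moreover have "[?s' (?s (i - 1) - 1) = ?s' (?s' (i - 1) - 1)] (mod ?n)"
    using sigma_unreduced_cong cong_diff[OF sigma_cong_unreduced cong_refl] by blast
  then have "[?s (?s (i - 1) - 1) - 1 = ?s' (?s' (i - 1) - 1) - 1] (mod ?n)"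
    using sigma_cong_unreduced cong_trans cong_diff cong_refl by blast
  ultimately show ?thesis
    using sigma_unreduced_succ_pred cong_trans cong_sym by metis
qed

definition side_rotation :: "nat \<Rightarrow> int \<Rightarrow> complex" where
  "side_rotation g x = cis (2 * pi * real_of_int x / real_of_int (nsides g))"

lemma side_rotation_add: "side_rotation g (a + b) = side_rotation g a * side_rotation g b"
  unfolding side_rotation_def cis_mult by (simp add: add_divide_distrib distrib_left)

lemma norm_side_rotation [simp]: "norm (side_rotation g x) = 1"
  by (simp add: side_rotation_def)

lemma side_rotation_nonzero [simp]: "side_rotation g x \<noteq> 0"
  using norm_side_rotation[of g x] by (metis norm_zero zero_neq_one)

lemma side_rotation_cong:
  assumes "[a = b] (mod nsides g)"
  shows "side_rotation g a = side_rotation g b"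
proof -
  obtain k where b: "b = a + nsides g * k"
    using assms by (auto simp: cong_iff_lin)
  have "nsides g \<noteq> 0"
    unfolding nsides_def by presburger
  then have "side_rotation g b = side_rotation g a * cis (2 * pi * real_of_int k)"
    unfolding side_rotation_def cis_mult b by (simp add: field_simps)
  then show ?thesis by simp
qed

lemma cis_side_angle: "cis (side_angle g x) = side_rotation g x"
  unfolding side_angle_def using side_rotation_cong[OF idx_cong]
  by (simp add: side_rotation_def)

lemma transl_eq_Moebius_function: "transl t = Moebius_function 0 (complex_of_real t)"
  by (simp add: fun_eq_iff transl_def Moebius_function_simple)

lemma norm_transl_less_1: "\<bar>t\<bar> < 1 \<Longrightarrow> norm z < 1 \<Longrightarrow> norm (transl t z) < 1"
  unfolding transl_eq_Moebius_function by (rule Moebius_function_norm_lt_1) simp_all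

lemma transl_denominator_nonzero:
  assumes "\<bar>t\<bar> < 1" and "norm z < 1"
  shows "1 - complex_of_real t * z \<noteq> 0"
proof
  assume "1 - complex_of_real t * z = 0"
  then have "norm (complex_of_real t * z) = 1" by simp
  moreover have "norm (complex_of_real t * z) < 1"
    using assms mult_strict_mono'[of "\<bar>t\<bar>" 1 "norm z" 1] by (simp add: norm_mult)
  ultimately show False by simp
qed

lemma transl_mult_denominator:
  "\<bar>t\<bar> < 1 \<Longrightarrow> norm z < 1 \<Longrightarrow>
    transl t z * (1 - complex_of_real t * z) = z - complex_of_real t"
  using transl_denominator_nonzero by (simp add: transl_def)

lemma cleared_rotation_identity:
  fixes t w u a b :: "'a :: field_char_0"
  assumes "2 * w * t\<^sup>2 = w\<^sup>2 + 1"
    and "a * (1 - t * u) = u - t" and "b * (1 - t * (w * u)) = w * u - t"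
  shows "((- a - t * w) * (1 + t * w * b) - w * (- w * b - t) * (w + t * a))
      * ((1 - t * u) * (1 - t * (w * u))) = 0"
  using assms by algebra

lemma transl_rotation_identity:
  fixes t :: real and u w :: complex
  assumes t: "\<bar>t\<bar> < 1" and u: "norm u < 1" and w: "norm w = 1"
    and tw: "2 * w * (complex_of_real t)\<^sup>2 = w\<^sup>2 + 1"
  shows "transl t (- transl t u / w) = w * transl t (- w * transl t (w * u))"
proof -
  define a b where "a = transl t u" and "b = transl t (w * u)"
  let ?t = "complex_of_real t"
  have "w \<noteq> 0" using w by auto
  have wu: "norm (w * u) < 1" using u w by (simp add: norm_mult)
  have "norm (- a / w) < 1" "norm (- w * b) < 1"
    unfolding a_def b_def using norm_transl_less_1[OF t] u wu w
    by (simp_all add: norm_mult norm_divide)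
  then have "1 - ?t * (- a / w) \<noteq> 0" "1 - ?t * (- w * b) \<noteq> 0"
    using transl_denominator_nonzero[OF t] by blast+
  then have den: "w + ?t * a \<noteq> 0" "1 + ?t * w * b \<noteq> 0"
    using \<open>w \<noteq> 0\<close> by (auto simp: field_simps)
  have "1 - ?t * u \<noteq> 0" "1 - ?t * (w * u) \<noteq> 0"
    using transl_denominator_nonzero[OF t] u wu by blast+
  moreover have "a * (1 - ?t * u) = u - ?t" and "b * (1 - ?t * (w * u)) = w * u - ?t"
    unfolding a_def b_def using transl_mult_denominator[OF t] u wu by blast+
  note cleared_rotation_identity[OF tw this]
  ultimately have "(- a - ?t * w) * (1 + ?t * w * b) = w * (- w * b - ?t) * (w + ?t * a)"
    by simp
  moreover have "transl t (- a / w) = (- a - ?t * w) / (w + ?t * a)"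
  proof -
    have "- a / w - ?t = (- a - ?t * w) / w" "1 - ?t * (- a / w) = (w + ?t * a) / w"
      using \<open>w \<noteq> 0\<close> by (simp_all add: field_simps)
    then show ?thesis using \<open>w \<noteq> 0\<close> by (simp add: transl_def)
  qed
  moreover have "w * transl t (- w * b) = w * (- w * b - ?t) / (1 + ?t * w * b)"
    by (simp add: transl_def field_simps)
  ultimately show ?thesis
    unfolding a_def[symmetric] b_def[symmetric] using den by (simp add: frac_eq_eq)
qed

lemma two_mult_Re_unit:
  assumes "norm w = 1"
  shows "2 * w * complex_of_real (Re w) = w\<^sup>2 + 1"
proof -
  have "w * cnj w = 1"
    using assms by (simp add: complex_norm_square[symmetric])
  moreover have "2 * complex_of_real (Re w) = w + cnj w"
    by (simp add: complex_add_cnj)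
  ultimately show ?thesis
    by (simp add: power2_eq_square algebra_simps)
qed

lemma tanh_mid_dist_sq:
  assumes "g \<ge> 2"
  shows "(tanh (mid_dist g))\<^sup>2 = cos (2 * pi / real_of_int (nsides g))"
proof -
  define n where "n = real_of_int (nsides g)"
  define s where "s = sin (pi / n)"
  have "n \<ge> 12" using assms unfolding n_def nsides_def by simp
  then have angle: "0 < pi / n" "pi / n \<le> pi / 4"
    using pi_gt_zero by (auto simp: field_simps)
  have s0: "s > 0"
    unfolding s_def using angle by (intro sin_gt_zero) linarith+
  have "s \<le> sqrt 2 / 2"
    unfolding s_def sin_45[symmetric] using angle by (intro sin_monotone_2pi_le) auto
  define x where "x = cos (pi / 4) / s"
  have x: "x \<ge> 1" and x_sq: "x\<^sup>2 = 1 / (2 * s\<^sup>2)"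
    unfolding x_def cos_45 using s0 \<open>s \<le> sqrt 2 / 2\<close> by (simp_all add: power_divide)
  have "cosh (mid_dist g) = x"
    using x unfolding mid_dist_def x_def s_def n_def by simp
  then have "(tanh (mid_dist g))\<^sup>2 = (x\<^sup>2 - 1) / x\<^sup>2"
    unfolding tanh_def by (simp add: power_divide sinh_square_eq)
  also have "\<dots> = 1 - 2 * s\<^sup>2"
    using x_sq s0 x by (simp add: field_simps)
  also have "\<dots> = cos (2 * pi / n)"
    unfolding s_def using cos_double_sin[of "pi / n"] by simp
  finally show ?thesis unfolding n_def .
qed

lemma tanh_mid_dist_side_rotation:
  assumes "g \<ge> 2"
  shows "2 * side_rotation g 1 * (complex_of_real (tanh (mid_dist g)))\<^sup>2
    = (side_rotation g 1)\<^sup>2 + 1"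
proof -
  have "(tanh (mid_dist g))\<^sup>2 = Re (side_rotation g 1)"
    using tanh_mid_dist_sq[OF assms] by (simp add: side_rotation_def)
  then show ?thesis
    using two_mult_Re_unit[OF norm_side_rotation] by (simp flip: of_real_power)
qed

lemma Tgen_eq:
  "Tgen g j y = - side_rotation g (sigma g j) * transl (tanh (mid_dist g)) (y / side_rotation g j)"
proof -
  have "cis (- side_angle g j) * y = y / cis (side_angle g j)"
    by (simp add: divide_inverse mult.commute)
  then show ?thesis
    unfolding Tgen_def cis_mult[symmetric] by (simp add: cis_side_angle)
qed

theorem lemma3p2:
  fixes g :: nat and i :: int and z :: complex
  assumes "g \<ge> 2" and "norm z < 1"
  shows "Tgen g (sigma g i + 1) (Tgen g i z) = Tgen g (sigma g (i - 1) - 1) (Tgen g (i - 1) z)"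
proof -
  define t where "t = tanh (mid_dist g)"
  define e where "e x = side_rotation g x" for x
  define w where "w = e 1"
  define u where "u = z / e i"
  have T: "Tgen g j y = - e (sigma g j) * transl t (y / e j)" for j y
    unfolding Tgen_eq t_def e_def ..
  have shift: "e (x + 1) = e x * w" "e x = e (x - 1) * w" for x
    unfolding e_def w_def using side_rotation_add[of g x 1] side_rotation_add[of g "x - 1" 1]
    by simp_all
  have [simp]: "e x \<noteq> 0" "w \<noteq> 0" for x by (simp_all add: e_def w_def)
  have "\<bar>t\<bar> < 1" unfolding t_def using tanh_real_bounds[of "mid_dist g"] by auto
  have "norm u < 1" using \<open>norm z < 1\<close> by (simp add: u_def e_def norm_divide)
  have "norm w = 1" by (simp add: w_def e_def)
  have "2 * w * (complex_of_real t)\<^sup>2 = w\<^sup>2 + 1"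
    using tanh_mid_dist_side_rotation[OF \<open>g \<ge> 2\<close>] by (simp add: t_def w_def e_def)
  note identity = transl_rotation_identity[OF \<open>\<bar>t\<bar> < 1\<close> \<open>norm u < 1\<close> \<open>norm w = 1\<close> this]
  have "e (sigma g (sigma g (i - 1) - 1)) = e (sigma g (sigma g i + 1)) * w"
    using side_rotation_cong[OF sigma_succ_pred_cong, of g i]
      shift(2)[of "sigma g (sigma g (i - 1) - 1)"] by (simp add: e_def)
  moreover have "Tgen g i z / e (sigma g i + 1) = - transl t u / w"
    unfolding T u_def shift(1) by simp
  moreover have "Tgen g (i - 1) z / e (sigma g (i - 1) - 1) = - w * transl t (w * u)"
    unfolding T u_def shift(2)[of i] shift(2)[of "sigma g (i - 1)"] by simp
  ultimately show ?thesis
    using identity unfolding T[of "sigma g i + 1"] T[of "sigma g (i - 1) - 1"] by simp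
qed

end
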